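(* Let $A\in\mathbb{R}^{n\times n}$ with $\rho(|A|)<1$ (in particular $\rho(A)<1$), let $\mathcal{X}=(I-|A|)^{-1}$ with entries $\mathcal{X}_{pq}$, let $i,j\in\{1,\dots,n\}$, and let $w\in\mathbb{R}$ satisfy $-\frac{1}{\mathcal{X}_{ij}}<w<\frac{1}{\mathcal{X}_{ij}}$ (if $\mathcal{X}_{ij}=0$ this condition imposes no restriction on $w$). Then the modified matrix $A+we_je_i^{\top}$ (adding weight $w$ to the edge $i\to j$) satisfies $\rho(A+we_je_i^{\top})<1$.
   Context: $|A|$ is the entrywise absolute value; $\rho$ is the spectral radius; $e_k$ is the $k$-th canonical unit vector. Note $\mathcal{X}\ge0$ entrywise. *)

theory Defs
  imports "Jordan_Normal_Form.Spectral_Radius"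
begin

definition abs_mat :: "real mat \<Rightarrow> real mat" where
  "abs_mat A = map_mat abs A"

definition spectral_radius_real :: "real mat \<Rightarrow> real" where
  "spectral_radius_real A = spectral_radius (map_mat complex_of_real A)"

text \<open>Rank-one matrix e_j e_i^T of size n (0-based indices).\<close>
definition outer_unit :: "nat \<Rightarrow> nat \<Rightarrow> nat \<Rightarrow> real mat" where
  "outer_unit n j i = mat n n (\<lambda>(p,q). (unit_vec n j $ p) * (unit_vec n i $ q))"

end

theory Submission
  imports Defs
begin

text \<open>
  Suppose \<open>A + w e\<^sub>j e\<^sub>i\<^sup>T\<close> had an eigenvalue of modulus at least 1, with eigenvector \<open>v\<close>,
  and put \<open>u = |v|\<close>. Then \<open>u \<le> |A| u + |w| u\<^sub>i e\<^sub>j\<close>. For the nonnegative matrix \<open>|A|\<close>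
  with spectral radius below 1, every \<open>z\<close> with \<open>z \<le> |A| z\<close> satisfies \<open>z \<le> |A|\<^sup>k z \<rightarrow> 0\<close>,
  hence \<open>z \<le> 0\<close>; applied to \<open>z = u - |w| u\<^sub>i X e\<^sub>j\<close> this gives \<open>u \<le> |w| u\<^sub>i X e\<^sub>j\<close>.
  The \<open>i\<close>-th entry reads \<open>u\<^sub>i \<le> |w| X\<^sub>i\<^sub>j u\<^sub>i\<close> with \<open>|w| X\<^sub>i\<^sub>j < 1\<close>, so \<open>u\<^sub>i = 0\<close>,
  then \<open>u = 0\<close>, contradicting \<open>v \<noteq> 0\<close>.
\<close>

lemma smult_pow_mat:
  fixes A :: "'a :: comm_semiring_1 mat"
  assumes A: "A \<in> carrier_mat n n"
  shows "(c \<cdot>\<^sub>m A) ^\<^sub>m k = c ^ k \<cdot>\<^sub>m A ^\<^sub>m k"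
proof (induction k)
  case (Suc k)
  have "(c \<cdot>\<^sub>m A) ^\<^sub>m Suc k = (c ^ k \<cdot>\<^sub>m A ^\<^sub>m k) * (c \<cdot>\<^sub>m A)"
    using Suc by simp
  also have "\<dots> = c ^ Suc k \<cdot>\<^sub>m A ^\<^sub>m Suc k"
    using A by (intro eq_matI) (auto simp: mult_ac)
  finally show ?case .
qed (use A in auto)

lemma smult_mat_mult_vec:
  fixes A :: "'a :: comm_semiring_0 mat"
  assumes A: "A \<in> carrier_mat nr nc" and v: "v \<in> carrier_vec nc"
  shows "(c \<cdot>\<^sub>m A) *\<^sub>v v = c \<cdot>\<^sub>v (A *\<^sub>v v)"
  using A v by (intro eq_vecI) (auto simp: carrier_matD carrier_vecD)

lemma eigenvector_smult_mat:
  assumes A: "A \<in> carrier_mat n n" and v: "eigenvector A v ev"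
  shows "eigenvector (c \<cdot>\<^sub>m A) v (c * ev)"
proof -
  have v_carrier: "v \<in> carrier_vec n" and Av: "A *\<^sub>v v = ev \<cdot>\<^sub>v v"
    using v A unfolding eigenvector_def by auto
  have "(c \<cdot>\<^sub>m A) *\<^sub>v v = (c * ev) \<cdot>\<^sub>v v"
    by (simp add: smult_mat_mult_vec[OF A v_carrier] Av smult_smult_assoc)
  thus ?thesis using v A unfolding eigenvector_def by simp
qed

lemma spectral_radius_eigenvector:
  assumes A: "A \<in> carrier_mat n n" and n: "n > 0"
  obtains v ev where "eigenvector A v ev" and "norm ev = spectral_radius A"
  using spectral_radius_mem_max(1)[OF A n] unfolding spectrum_def eigenvalue_def by force

lemma spectral_radius_smult_le:
  fixes A :: "complex mat"
  assumes A: "A \<in> carrier_mat n n" and n: "n > 0" and c: "c \<noteq> 0"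
  shows "spectral_radius (c \<cdot>\<^sub>m A) \<le> norm c * spectral_radius A"
proof -
  have cA: "c \<cdot>\<^sub>m A \<in> carrier_mat n n" using A by simp
  obtain v ev where v: "eigenvector (c \<cdot>\<^sub>m A) v ev"
    and max: "norm ev = spectral_radius (c \<cdot>\<^sub>m A)"
    using spectral_radius_eigenvector[OF cA n] .
  from eigenvector_smult_mat[OF cA v, of "inverse c"]
  have "eigenvalue (inverse c \<cdot>\<^sub>m (c \<cdot>\<^sub>m A)) (ev / c)"
    unfolding eigenvalue_def by (auto simp: field_simps)
  moreover have "inverse c \<cdot>\<^sub>m (c \<cdot>\<^sub>m A) = A"
    using c A by (intro eq_matI) auto
  ultimately have "eigenvalue A (ev / c)" by simp
  hence "norm (ev / c) \<le> spectral_radius A"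
    using spectral_radius_mem_max(2)[OF A n] unfolding spectrum_def by auto
  hence "norm ev / norm c \<le> spectral_radius A" by (simp add: norm_divide)
  thus ?thesis using c by (simp add: max[symmetric] pos_divide_le_eq mult.commute)
qed

lemma spectral_radius_less_1_pow_tendsto_zero:
  fixes A :: "complex mat"
  assumes A: "A \<in> carrier_mat n n" and sr: "spectral_radius A < 1"
    and p: "p < n" and q: "q < n"
  shows "(\<lambda>k. (A ^\<^sub>m k) $$ (p,q)) \<longlonglongrightarrow> 0"
proof -
  have n: "n > 0" using p by simp
  have sr_nonneg: "spectral_radius A \<ge> 0"
    using spectral_radius_mem_max(1)[OF A n] by auto
  \<comment> \<open>\<open>c A\<close> still has spectral radius below 1, so its powers are bounded
    and those of \<open>A\<close> decay like \<open>1 / c\<^sup>k\<close>.\<close>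
  define c where "c = 2 / (1 + spectral_radius A)"
  have c: "c > 1" "c * spectral_radius A < 1"
    using sr sr_nonneg unfolding c_def by (auto simp: field_simps)
  let ?B = "complex_of_real c \<cdot>\<^sub>m A"
  have "spectral_radius ?B < 1"
    using spectral_radius_smult_le[OF A n, of "complex_of_real c"] c by simp
  then obtain C where C: "\<And>k. norm_bound (?B ^\<^sub>m k) C"
    using spectral_radius_jnf_norm_bound_less_1_upper_triangular[of ?B n] A by auto
  have bound: "norm ((A ^\<^sub>m k) $$ (p,q)) \<le> norm (inverse c ^ k) * C" for k
  proof -
    have "norm ((?B ^\<^sub>m k) $$ (p,q)) \<le> C"
      using C[of k] A p q unfolding norm_bound_def by simp
    hence "c ^ k * norm ((A ^\<^sub>m k) $$ (p,q)) \<le> C"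
      using A p q c by (simp add: smult_pow_mat norm_mult norm_power)
    thus ?thesis using c by (simp add: field_simps power_inverse)
  qed
  have geometric: "(\<lambda>k. inverse c ^ k) \<longlonglongrightarrow> 0"
    using c by (intro LIMSEQ_realpow_zero) (auto simp: field_simps)
  show ?thesis by (rule tendsto_0_le[OF geometric, where K = C]) (intro always_eventually allI bound)
qed

lemma spectral_radius_real_less_1_pow_tendsto_zero:
  fixes N :: "real mat"
  assumes N: "N \<in> carrier_mat n n" and sr: "spectral_radius_real N < 1"
    and p: "p < n" and q: "q < n"
  shows "(\<lambda>k. (N ^\<^sub>m k) $$ (p,q)) \<longlonglongrightarrow> 0"
proof -
  have "(map_mat complex_of_real N ^\<^sub>m k) $$ (p,q) = complex_of_real ((N ^\<^sub>m k) $$ (p,q))" for k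
    unfolding of_real_hom.mat_hom_pow[OF N, symmetric] using N p q by (rule_tac index_map_mat) auto
  hence "(\<lambda>k. complex_of_real ((N ^\<^sub>m k) $$ (p,q))) \<longlonglongrightarrow> complex_of_real 0"
    using spectral_radius_less_1_pow_tendsto_zero[of "map_mat complex_of_real N" n p q] N sr p q
    unfolding spectral_radius_real_def by simp
  thus ?thesis by (rule tendsto_of_real_iff[THEN iffD1])
qed

lemma mult_mat_vec_mono:
  fixes N :: "'a :: ordered_semiring_0 mat"
  assumes N: "N \<in> carrier_mat nr nc" and N_nonneg: "0\<^sub>m nr nc \<le> N"
    and xy: "x \<le> y" and y: "y \<in> carrier_vec nc"
  shows "N *\<^sub>v x \<le> N *\<^sub>v y"
proof -
  have x: "x \<in> carrier_vec nc" using xy y unfolding less_eq_vec_def carrier_vec_def by simp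
  have "row N p \<bullet> x \<le> row N p \<bullet> y" if p: "p < nr" for p
  proof -
    have "(\<Sum>r = 0..<nc. row N p $ r * x $ r) \<le> (\<Sum>r = 0..<nc. row N p $ r * y $ r)"
      using xy N_nonneg N p y unfolding less_eq_vec_def less_eq_mat_def
      by (intro sum_mono mult_left_mono) auto
    thus ?thesis using x y by (simp add: scalar_prod_def)
  qed
  then show ?thesis
    using N unfolding less_eq_vec_def by auto
qed

lemma mult_mat_vec_left_mono:
  fixes A B :: "'a :: ordered_semiring_0 mat"
  assumes AB: "A \<le> B" and B: "B \<in> carrier_mat nr nc"
    and v: "v \<in> carrier_vec nc" and v_nonneg: "0\<^sub>v nc \<le> v"
  shows "A *\<^sub>v v \<le> B *\<^sub>v v"
proof -
  have A: "A \<in> carrier_mat nr nc" using AB B unfolding less_eq_mat_def carrier_mat_def by simp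
  have "row A p \<bullet> v \<le> row B p \<bullet> v" if p: "p < nr" for p
  proof -
    have "(\<Sum>r = 0..<nc. row A p $ r * v $ r) \<le> (\<Sum>r = 0..<nc. row B p $ r * v $ r)"
      using AB v_nonneg A B p v unfolding less_eq_vec_def less_eq_mat_def
      by (intro sum_mono mult_right_mono) auto
    thus ?thesis using v by (simp add: scalar_prod_def)
  qed
  then show ?thesis
    using A B unfolding less_eq_vec_def by auto
qed

lemma pow_mat_nonneg:
  fixes N :: "'a :: linordered_semidom mat"
  assumes N: "N \<in> carrier_mat n n" and N_nonneg: "0\<^sub>m n n \<le> N"
  shows "0\<^sub>m n n \<le> N ^\<^sub>m k"
proof (induction k)
  case 0
  show ?case using N by (auto simp: less_eq_mat_def)
next
  case (Suc k)
  have "0 \<le> (N ^\<^sub>m k * N) $$ (p,q)" if "p < n" "q < n" for p q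
  proof -
    have "0 \<le> (\<Sum>r = 0..<n. (N ^\<^sub>m k) $$ (p,r) * N $$ (r,q))"
      using Suc N_nonneg that unfolding less_eq_mat_def
      by (intro sum_nonneg mult_nonneg_nonneg) auto
    thus ?thesis using N that by (simp add: scalar_prod_def)
  qed
  thus ?case using N unfolding less_eq_mat_def by auto
qed

lemma sub_invariant_vec_le_pow_mult:
  fixes N :: "'a :: linordered_semidom mat"
  assumes N: "N \<in> carrier_mat n n" and N_nonneg: "0\<^sub>m n n \<le> N"
    and z: "z \<in> carrier_vec n" and z_le: "z \<le> N *\<^sub>v z"
  shows "z \<le> N ^\<^sub>m k *\<^sub>v z"
proof (induction k)
  case 0
  show ?case using z N by simp
next
  case (Suc k)
  have "z \<le> N ^\<^sub>m k *\<^sub>v z" by (fact Suc)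
  also have "\<dots> \<le> N ^\<^sub>m k *\<^sub>v (N *\<^sub>v z)"
    by (rule mult_mat_vec_mono[OF pow_carrier_mat[OF N] pow_mat_nonneg[OF N N_nonneg] z_le
          mult_mat_vec_carrier[OF N z]])
  also have "\<dots> = N ^\<^sub>m Suc k *\<^sub>v z"
    by (simp add: assoc_mult_mat_vec[OF pow_carrier_mat[OF N] N z])
  finally show ?case .
qed

lemma spectral_radius_real_less_1_pow_mult_vec_tendsto_zero:
  fixes N :: "real mat"
  assumes N: "N \<in> carrier_mat n n" and sr: "spectral_radius_real N < 1"
    and z: "z \<in> carrier_vec n" and p: "p < n"
  shows "(\<lambda>k. (N ^\<^sub>m k *\<^sub>v z) $ p) \<longlonglongrightarrow> 0"
proof -
  have "(\<lambda>k. \<Sum>r<n. (N ^\<^sub>m k) $$ (p,r) * z $ r) \<longlonglongrightarrow> 0"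
    using spectral_radius_real_less_1_pow_tendsto_zero[OF N sr p]
    by (intro tendsto_null_sum tendsto_mult_left_zero) auto
  moreover have "(N ^\<^sub>m k *\<^sub>v z) $ p = (\<Sum>r<n. (N ^\<^sub>m k) $$ (p,r) * z $ r)" for k
    using N z p by (simp add: scalar_prod_def atLeast0LessThan)
  ultimately show ?thesis by simp
qed

lemma sub_invariant_vec_nonpos:
  fixes N :: "real mat"
  assumes N: "N \<in> carrier_mat n n" and N_nonneg: "0\<^sub>m n n \<le> N"
    and sr: "spectral_radius_real N < 1"
    and z: "z \<in> carrier_vec n" and z_le: "z \<le> N *\<^sub>v z"
  shows "z \<le> 0\<^sub>v n"
  unfolding less_eq_vec_def
proof (intro conjI allI impI)
  fix p assume "p < dim_vec (0\<^sub>v n :: real vec)"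
  hence p: "p < n" by simp
  have "z $ p \<le> 0"
  proof (rule LIMSEQ_le_const)
    show "(\<lambda>k. (N ^\<^sub>m k *\<^sub>v z) $ p) \<longlonglongrightarrow> 0"
      by (rule spectral_radius_real_less_1_pow_mult_vec_tendsto_zero[OF N sr z p])
    show "\<exists>k0. \<forall>k\<ge>k0. z $ p \<le> (N ^\<^sub>m k *\<^sub>v z) $ p"
      using sub_invariant_vec_le_pow_mult[OF N N_nonneg z z_le] p N unfolding less_eq_vec_def by simp
  qed
  thus "z $ p \<le> 0\<^sub>v n $ p" using p by simp
qed (use z in simp)

lemma le_resolvent_mult_vec:
  fixes N X :: "real mat"
  assumes N: "N \<in> carrier_mat n n" and N_nonneg: "0\<^sub>m n n \<le> N"
    and sr: "spectral_radius_real N < 1"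
    and X: "X \<in> carrier_mat n n" and inv: "(1\<^sub>m n - N) * X = 1\<^sub>m n"
    and u: "u \<in> carrier_vec n" and b: "b \<in> carrier_vec n"
    and u_le: "u \<le> N *\<^sub>v u + b"
  shows "u \<le> X *\<^sub>v b"
proof -
  have Xb: "X *\<^sub>v b \<in> carrier_vec n" using X b by simp
  have "b = ((1\<^sub>m n - N) * X) *\<^sub>v b" using inv b by simp
  also have "\<dots> = (1\<^sub>m n - N) *\<^sub>v (X *\<^sub>v b)"
    using N X b by (intro assoc_mult_mat_vec) auto
  also have "\<dots> = X *\<^sub>v b - N *\<^sub>v (X *\<^sub>v b)"
    using minus_mult_distrib_mat_vec[OF one_carrier_mat N Xb] Xb by simp
  finally have b_eq: "b = X *\<^sub>v b - N *\<^sub>v (X *\<^sub>v b)" .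
  define y where "y = u - X *\<^sub>v b"
  have y: "y \<in> carrier_vec n" using u Xb unfolding y_def by simp
  have "y \<le> N *\<^sub>v y"
    unfolding less_eq_vec_def
  proof (intro conjI allI impI)
    fix p assume "p < dim_vec (N *\<^sub>v y)"
    hence p: "p < n" using N by simp
    have "u $ p \<le> (N *\<^sub>v u) $ p + b $ p"
      using u_le p N u b unfolding less_eq_vec_def by simp
    moreover have "b $ p = (X *\<^sub>v b) $ p - (N *\<^sub>v (X *\<^sub>v b)) $ p"
      using arg_cong[OF b_eq, of "\<lambda>v. v $ p"] p N X by simp
    moreover have "(N *\<^sub>v y) $ p = (N *\<^sub>v u) $ p - (N *\<^sub>v (X *\<^sub>v b)) $ p"
      unfolding y_def using mult_minus_distrib_mat_vec[OF N u Xb] p N by simp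
    ultimately show "y $ p \<le> (N *\<^sub>v y) $ p"
      unfolding y_def using p u X by simp
  qed (use N y in simp)
  from sub_invariant_vec_nonpos[OF N N_nonneg sr y this]
  show ?thesis using u X b unfolding y_def less_eq_vec_def by auto
qed

lemma outer_unit_carrier [simp]: "outer_unit n j i \<in> carrier_mat n n"
  by (simp add: outer_unit_def)

lemma outer_unit_mult_vec:
  assumes x: "x \<in> carrier_vec n" and i: "i < n"
  shows "outer_unit n j i *\<^sub>v x = x $ i \<cdot>\<^sub>v unit_vec n j"
proof (rule eq_vecI)
  fix p assume "p < dim_vec (x $ i \<cdot>\<^sub>v unit_vec n j)"
  hence p: "p < n" by simp
  have "(outer_unit n j i *\<^sub>v x) $ p = (\<Sum>q = 0..<n. unit_vec n j $ p * unit_vec n i $ q * x $ q)"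
    using p x unfolding outer_unit_def by (simp add: scalar_prod_def)
  also have "\<dots> = (\<Sum>q = 0..<n. if q = i then (if p = j then x $ q else 0) else 0)"
    using p by (intro sum.cong) (auto simp: unit_vec_def)
  also have "\<dots> = (if p = j then x $ i else 0)"
    using i by simp
  finally show "(outer_unit n j i *\<^sub>v x) $ p = (x $ i \<cdot>\<^sub>v unit_vec n j) $ p"
    using p by (simp add: unit_vec_def)
qed (simp add: outer_unit_def)

lemma abs_mat_carrier [simp]: "A \<in> carrier_mat nr nc \<Longrightarrow> abs_mat A \<in> carrier_mat nr nc"
  by (simp add: abs_mat_def)

lemma abs_mat_nonneg: "A \<in> carrier_mat nr nc \<Longrightarrow> 0\<^sub>m nr nc \<le> abs_mat A"
  unfolding abs_mat_def less_eq_mat_def by auto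

lemma abs_mat_add_smult_outer_unit_le:
  assumes A: "A \<in> carrier_mat n n"
  shows "abs_mat (A + w \<cdot>\<^sub>m outer_unit n j i) \<le> abs_mat A + \<bar>w\<bar> \<cdot>\<^sub>m outer_unit n j i"
  using A unfolding less_eq_mat_def abs_mat_def outer_unit_def
  by (auto simp: unit_vec_def)

lemma abs_eigenvector_le_abs_mat_mult:
  fixes B :: "real mat"
  assumes B: "B \<in> carrier_mat n n"
    and v: "eigenvector (map_mat complex_of_real B) v ev" and ev: "1 \<le> norm ev"
  shows "map_vec cmod v \<le> abs_mat B *\<^sub>v map_vec cmod v"
proof -
  have v_carrier: "v \<in> carrier_vec n" and Bv: "map_mat complex_of_real B *\<^sub>v v = ev \<cdot>\<^sub>v v"
    using v B unfolding eigenvector_def by auto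
  have "cmod (v $ p) \<le> (\<Sum>r = 0..<n. \<bar>B $$ (p,r)\<bar> * cmod (v $ r))" if p: "p < n" for p
  proof -
    have "cmod (v $ p) \<le> norm ev * cmod (v $ p)"
      using ev by (simp add: mult_le_cancel_right1)
    also have "\<dots> = cmod ((map_mat complex_of_real B *\<^sub>v v) $ p)"
      using Bv p v_carrier by (simp add: norm_mult)
    also have "\<dots> = cmod (\<Sum>r = 0..<n. complex_of_real (B $$ (p,r)) * v $ r)"
      using p B v_carrier by (simp add: scalar_prod_def)
    also have "\<dots> \<le> (\<Sum>r = 0..<n. \<bar>B $$ (p,r)\<bar> * cmod (v $ r))"
      by (rule order.trans[OF norm_sum]) (simp add: norm_mult)
    finally show ?thesis .
  qed
  thus ?thesis
    using B v_carrier unfolding less_eq_vec_def abs_mat_def by (simp add: scalar_prod_def)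
qed

lemma abs_mat_rank_one_update_mult_vec_le:
  assumes A: "A \<in> carrier_mat n n" and i: "i < n"
    and u: "u \<in> carrier_vec n" and u_nonneg: "0\<^sub>v n \<le> u"
  shows "abs_mat (A + w \<cdot>\<^sub>m outer_unit n j i) *\<^sub>v u
    \<le> abs_mat A *\<^sub>v u + (\<bar>w\<bar> * u $ i) \<cdot>\<^sub>v unit_vec n j"
proof -
  have absA: "abs_mat A \<in> carrier_mat n n" using A by simp
  have "abs_mat (A + w \<cdot>\<^sub>m outer_unit n j i) *\<^sub>v u \<le> (abs_mat A + \<bar>w\<bar> \<cdot>\<^sub>m outer_unit n j i) *\<^sub>v u"
    using abs_mat_add_smult_outer_unit_le[OF A] absA u u_nonneg
    by (intro mult_mat_vec_left_mono[where nr = n]) simp_all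
  also have "\<dots> = abs_mat A *\<^sub>v u + (\<bar>w\<bar> * u $ i) \<cdot>\<^sub>v unit_vec n j"
    using absA u i
    by (simp add: add_mult_distrib_mat_vec[of _ n n] smult_mat_mult_vec[of _ n n] outer_unit_mult_vec
        smult_smult_assoc)
  finally show ?thesis .
qed

lemma le_rank_one_update_imp_zero:
  fixes N X :: "real mat"
  assumes N: "N \<in> carrier_mat n n" and N_nonneg: "0\<^sub>m n n \<le> N"
    and sr: "spectral_radius_real N < 1"
    and X: "X \<in> carrier_mat n n" and inv: "(1\<^sub>m n - N) * X = 1\<^sub>m n"
    and i: "i < n" and j: "j < n" and c: "c * X $$ (i,j) < 1"
    and u: "u \<in> carrier_vec n" and u_nonneg: "0\<^sub>v n \<le> u"
    and u_le: "u \<le> N *\<^sub>v u + (c * u $ i) \<cdot>\<^sub>v unit_vec n j"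
  shows "u = 0\<^sub>v n"
proof -
  have u_le_X: "u \<le> X *\<^sub>v ((c * u $ i) \<cdot>\<^sub>v unit_vec n j)"
    by (rule le_resolvent_mult_vec[OF N N_nonneg sr X inv u _ u_le]) simp
  hence "u $ i \<le> c * X $$ (i,j) * u $ i"
    using i j X unfolding less_eq_vec_def by (simp add: mult_mat_vec mult_ac)
  moreover have "0 \<le> u $ i" using u_nonneg u i unfolding less_eq_vec_def carrier_vec_def by auto
  ultimately have "u $ i = 0"
    using c by (simp add: mult_le_cancel_right1)
  with u_le_X X have "u \<le> 0\<^sub>v n"
    unfolding less_eq_vec_def by simp
  with u_nonneg show ?thesis by simp
qed

lemma abs_mult_less_1_of_bounds:
  fixes x w :: real
  assumes "x = 0 \<or> (- 1 / x < w \<and> w < 1 / x)"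
  shows "\<bar>w\<bar> * x < 1"
proof (cases "x = 0")
  case False
  with assms have w_bounds: "- (1 / x) < w" "w < 1 / x" by auto
  hence "0 < 1 / x" by linarith
  hence "x > 0" by simp
  moreover have "\<bar>w\<bar> < 1 / x" using w_bounds by linarith
  ultimately show ?thesis by (simp add: field_simps)
qed simp

lemma map_vec_norm_eq_zero:
  assumes v: "v \<in> carrier_vec n" and zero: "map_vec norm v = 0\<^sub>v n"
  shows "v = 0\<^sub>v n"
proof (rule eq_vecI)
  fix p assume p: "p < dim_vec (0\<^sub>v n :: 'a vec)"
  hence "norm (v $ p) = 0" using arg_cong[OF zero, of "\<lambda>x. x $ p"] v by simp
  thus "v $ p = 0\<^sub>v n $ p" using p by simp
qed (use v in simp)

theorem theorem5p4:
  fixes A X :: "real mat" and n i j :: nat and w :: real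
  assumes A: "A \<in> carrier_mat n n"
    and rho: "spectral_radius_real (abs_mat A) < 1"
    and X: "X \<in> carrier_mat n n"
    and Xinv1: "(1\<^sub>m n - abs_mat A) * X = 1\<^sub>m n"
    and Xinv2: "X * (1\<^sub>m n - abs_mat A) = 1\<^sub>m n"
    and i: "i < n" and j: "j < n"
    and w: "X $$ (i,j) = 0 \<or> (- 1 / X $$ (i,j) < w \<and> w < 1 / X $$ (i,j))"
  shows "spectral_radius_real (A + w \<cdot>\<^sub>m outer_unit n j i) < 1"
proof (rule ccontr)
  define B where "B = A + w \<cdot>\<^sub>m outer_unit n j i"
  have B_real: "B \<in> carrier_mat n n" using A unfolding B_def by simp
  hence B: "map_mat complex_of_real B \<in> carrier_mat n n" by simp
  obtain v ev where v: "eigenvector (map_mat complex_of_real B) v ev"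
    and ev: "norm ev = spectral_radius_real B"
    using spectral_radius_eigenvector[OF B] i unfolding spectral_radius_real_def by auto
  assume "\<not> spectral_radius_real (A + w \<cdot>\<^sub>m outer_unit n j i) < 1"
  with ev have ev_ge_1: "1 \<le> norm ev" unfolding B_def by simp
  have v_carrier: "v \<in> carrier_vec n" and v_nonzero: "v \<noteq> 0\<^sub>v n"
    using v B unfolding eigenvector_def by auto
  let ?u = "map_vec norm v"
  have u: "?u \<in> carrier_vec n" "0\<^sub>v n \<le> ?u"
    using v_carrier unfolding less_eq_vec_def by auto
  have "?u \<le> abs_mat B *\<^sub>v ?u"
    by (rule abs_eigenvector_le_abs_mat_mult[OF B_real v ev_ge_1])
  also have "\<dots> \<le> abs_mat A *\<^sub>v ?u + (\<bar>w\<bar> * ?u $ i) \<cdot>\<^sub>v unit_vec n j"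
    unfolding B_def by (rule abs_mat_rank_one_update_mult_vec_le[OF A i u])
  finally have "?u = 0\<^sub>v n"
    using le_rank_one_update_imp_zero[OF _ abs_mat_nonneg[OF A] rho X Xinv1 i j
        abs_mult_less_1_of_bounds[OF w] u] A
    by simp
  with v_carrier v_nonzero show False by (simp add: map_vec_norm_eq_zero)
qed

end
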